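(* Let $m\ge 2$ and $n\ge1$ be integers, $0<\delta\le 10^{-6}$, $A=(n+1)^{n+1}n^{-n}$, $f(t)=(At^n(1-t))^m$ on $[0,1]$, and $B=\frac{n}{n+1}$. For $0\le k\le m$ put \[F(k,m,\delta)=\frac{1}{\|f\|_1}\int_0^1(1+\delta t)^{1+k}|f^{(k)}(t)|\,dt,\] where $\|f\|_1=\int_0^1|f(t)|dt$ and $\|f^{(m)}\|_2=\left(\int_0^1|f^{(m)}(t)|^2dt\right)^{1/2}$. Define \[\lambda_0(m,n,\delta)=\frac{2(B^n-B^{n+1})^m(mn+m+1)!}{m!\,(mn)!},\qquad \lambda_1(m,n,\delta)=(1+\delta)^2\frac{2(B^n-B^{n+1})^m(mn+m+1)!}{m!\,(mn)!},\] \[\lambda(m,n,\delta)=\sqrt{\frac{(1+\delta)^{2m+3}-1}{\delta(2m+3)}}\;\frac{(mn+m+1)!}{A^m\,m!\,(mn)!}\,\|f^{(m)}\|_2.\] Then $1\le F(0,m,\delta)\le 1+\delta$, $\lambda_0(m,n,\delta)\le F(1,m,\delta)\le\lambda_1(m,n,\delta)$, and $F(m,m,\delta)\le\lambda(m,n,\delta)$. *)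

theory Defs
  imports "HOL-Analysis.Analysis"
begin

definition constA :: "nat \<Rightarrow> real" where
  "constA n = real (n + 1) ^ (n + 1) / real n ^ n"

definition constB :: "nat \<Rightarrow> real" where
  "constB n = real n / real (n + 1)"

definition fpoly :: "nat \<Rightarrow> nat \<Rightarrow> real \<Rightarrow> real" where
  "fpoly m n t = (constA n * t ^ n * (1 - t)) ^ m"

definition norm1_f :: "nat \<Rightarrow> nat \<Rightarrow> real" where
  "norm1_f m n = integral {0..1} (\<lambda>t. \<bar>fpoly m n t\<bar>)"

definition norm2_fm :: "nat \<Rightarrow> nat \<Rightarrow> real" where
  "norm2_fm m n = sqrt (integral {0..1} (\<lambda>t. \<bar>(deriv ^^ m) (fpoly m n) t\<bar> ^ 2))"

definition Fk :: "nat \<Rightarrow> nat \<Rightarrow> nat \<Rightarrow> real \<Rightarrow> real" where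
  "Fk k m n \<delta> = (1 / norm1_f m n) *
     integral {0..1} (\<lambda>t. (1 + \<delta> * t) ^ (1 + k) * \<bar>(deriv ^^ k) (fpoly m n) t\<bar>)"

definition lambda0 :: "nat \<Rightarrow> nat \<Rightarrow> real \<Rightarrow> real" where
  "lambda0 m n \<delta> = 2 * (constB n ^ n - constB n ^ (n + 1)) ^ m * fact (m * n + m + 1)
       / (fact m * fact (m * n))"

definition lambda1 :: "nat \<Rightarrow> nat \<Rightarrow> real \<Rightarrow> real" where
  "lambda1 m n \<delta> = (1 + \<delta>) ^ 2 * (2 * (constB n ^ n - constB n ^ (n + 1)) ^ m
       * fact (m * n + m + 1) / (fact m * fact (m * n)))"

definition lambdaM :: "nat \<Rightarrow> nat \<Rightarrow> real \<Rightarrow> real" where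
  "lambdaM m n \<delta> = sqrt (((1 + \<delta>) ^ (2 * m + 3) - 1) / (\<delta> * real (2 * m + 3)))
       * (fact (m * n + m + 1) / (constA n ^ m * fact m * fact (m * n))) * norm2_fm m n"

end

theory Submission
  imports Defs "HOL-Computational_Algebra.Polynomial"
begin

(* On [0,1] the polynomial f = (A t^n (1 - t))^m is nonnegative, rises from f 0 = 0 to
   f B = 1 (because B^n (1 - B) = 1/A) and falls back to f 1 = 0, so the integral of |f'| is 2.
   Its L1 norm is the Beta integral A^m (mn)! m! / (mn + m + 1)!, which makes lambda0 = 2 / |f|_1.
   The weight (1 + delta t)^(1 + k) lies between 1 and (1 + delta)^(1 + k), giving the bounds
   for F(0) and F(1); the bound for F(m) is Cauchy-Schwarz for the weight and |f^(m)|. *)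

lemma has_integral_power_mult_one_minus_power:
  "((\<lambda>t::real. t ^ k * (1 - t) ^ l) has_integral fact k * fact l / fact (k + l + 1)) {0..1}"
proof -
  have "Beta (real k + 1) (real l + 1) = fact k * fact l / fact (k + l + 1)"
    using Gamma_fact[of k, where 'a = real] Gamma_fact[of l, where 'a = real]
      Gamma_fact[of "k + l + 1", where 'a = real]
    by (simp add: Beta_def add_ac)
  then have "((\<lambda>t. t powr real k * (1 - t) powr real l) has_integral
      fact k * fact l / fact (k + l + 1)) {0<..<1}"
    using has_integral_Beta_real[of "real k + 1" "real l + 1"]
    by (simp add: has_integral_Icc_iff_Ioo)
  then have "((\<lambda>t::real. t ^ k * (1 - t) ^ l) has_integral
      fact k * fact l / fact (k + l + 1)) {0<..<1}"
    by (rule has_integral_eq[rotated]) (simp add: powr_realpow)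
  then show ?thesis
    by (simp add: has_integral_Icc_iff_Ioo)
qed

lemma has_integral_one_plus_mult_power:
  assumes "\<delta> \<noteq> 0"
  shows "((\<lambda>t::real. (1 + \<delta> * t) ^ k) has_integral
           ((1 + \<delta>) ^ (k + 1) - 1) / (\<delta> * real (k + 1))) {0..1}"
proof -
  define P where "P t = (1 + \<delta> * t) ^ (k + 1) / (\<delta> * real (k + 1))" for t :: real
  have "(P has_real_derivative (1 + \<delta> * t) ^ k) (at t within {0..1})" for t
  proof -
    have "(P has_real_derivative real (k + 1) * (1 + \<delta> * t) ^ k * \<delta> / (\<delta> * real (k + 1)))
        (at t within {0..1})"
      unfolding P_def using assms by (intro derivative_eq_intros) auto
    then show ?thesis
      using assms by simp
  qed
  then have "((\<lambda>t. (1 + \<delta> * t) ^ k) has_integral P 1 - P 0) {0..1}"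
    by (intro fundamental_theorem_of_calculus)
       (auto simp: has_real_derivative_iff_has_vector_derivative[symmetric])
  then show ?thesis
    by (simp add: P_def diff_divide_distrib)
qed

lemma square_le_of_quadratic_nonneg:
  fixes G H I :: real
  assumes "0 \<le> G" and "\<And>a. 0 \<le> a\<^sup>2 * G - 2 * a * I + H"
  shows "I\<^sup>2 \<le> G * H"
proof (cases "G = 0")
  case True
  have "I = 0"
  proof (rule ccontr)
    assume "I \<noteq> 0"
    then have "0 \<le> - H - 2"
      using assms(2)[of "(H + 1) / I"] True by simp
    moreover have "0 \<le> H"
      using assms(2)[of 0] by simp
    ultimately show False
      by simp
  qed
  with True show ?thesis
    by simp
next
  case False
  with assms(1) have "G > 0"
    by simp
  have "0 \<le> (I / G)\<^sup>2 * G - 2 * (I / G) * I + H"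
    by (rule assms(2))
  also have "\<dots> = H - I\<^sup>2 / G"
    using \<open>G > 0\<close> by (simp add: power2_eq_square field_simps)
  finally show ?thesis
    using \<open>G > 0\<close> by (simp add: field_simps)
qed

lemma Cauchy_Schwarz_integral:
  fixes g h :: "'a::euclidean_space \<Rightarrow> real"
  assumes g2: "(\<lambda>t. (g t)\<^sup>2) integrable_on S" and h2: "(\<lambda>t. (h t)\<^sup>2) integrable_on S"
    and gh: "(\<lambda>t. g t * h t) integrable_on S"
  shows "integral S (\<lambda>t. g t * h t)
           \<le> sqrt (integral S (\<lambda>t. (g t)\<^sup>2)) * sqrt (integral S (\<lambda>t. (h t)\<^sup>2))"
proof -
  define G H I where "G = integral S (\<lambda>t. (g t)\<^sup>2)" and "H = integral S (\<lambda>t. (h t)\<^sup>2)"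
    and "I = integral S (\<lambda>t. g t * h t)"
  have "0 \<le> a\<^sup>2 * G - 2 * a * I + H" for a
  proof -
    have "((\<lambda>t. a\<^sup>2 * (g t)\<^sup>2 - 2 * a * (g t * h t) + (h t)\<^sup>2) has_integral
        a\<^sup>2 * G - 2 * a * I + H) S"
      unfolding G_def H_def I_def using g2 h2 gh
      by (intro has_integral_add has_integral_diff has_integral_mult_right integrable_integral)
    moreover have "a\<^sup>2 * (g t)\<^sup>2 - 2 * a * (g t * h t) + (h t)\<^sup>2 = (a * g t - h t)\<^sup>2" for t
      by (simp add: power2_eq_square algebra_simps)
    ultimately show ?thesis
      by (auto intro: has_integral_nonneg)
  qed
  moreover have "0 \<le> G"
    unfolding G_def using g2 by (rule integral_nonneg) simp
  ultimately have "I\<^sup>2 \<le> G * H"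
    using square_le_of_quadratic_nonneg by blast
  then have "\<bar>I\<bar> \<le> sqrt (G * H)"
    using real_sqrt_le_mono by fastforce
  then show ?thesis
    unfolding G_def H_def I_def by (simp add: real_sqrt_mult)
qed

lemma integral_weighted_bounds:
  fixes u w :: "'a::euclidean_space \<Rightarrow> real"
  assumes u: "u integrable_on S" and wu: "(\<lambda>t. w t * u t) integrable_on S"
    and "\<And>t. t \<in> S \<Longrightarrow> 0 \<le> u t"
    and "\<And>t. t \<in> S \<Longrightarrow> 1 \<le> w t \<and> w t \<le> c"
  shows "integral S u \<le> integral S (\<lambda>t. w t * u t)"
    and "integral S (\<lambda>t. w t * u t) \<le> c * integral S u"
proof -
  have bounds: "u t \<le> w t * u t \<and> w t * u t \<le> c * u t" if "t \<in> S" for t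
    using assms(3,4)[OF that] mult_right_mono[of 1 "w t" "u t"] mult_right_mono[of "w t" c "u t"]
    by simp
  show "integral S u \<le> integral S (\<lambda>t. w t * u t)"
    using bounds by (intro integral_le u wu) blast
  have "integral S (\<lambda>t. w t * u t) \<le> integral S (\<lambda>t. c * u t)"
    using bounds by (intro integral_le wu integrable_on_mult_right u) blast
  then show "integral S (\<lambda>t. w t * u t) \<le> c * integral S u"
    by simp
qed

lemma has_integral_abs_deriv_unimodal:
  fixes f f' :: "real \<Rightarrow> real"
  assumes "a \<le> c" "c \<le> b"
    and deriv: "\<And>t. t \<in> {a..b} \<Longrightarrow> (f has_real_derivative f' t) (at t)"
    and incr: "\<And>t. t \<in> {a..c} \<Longrightarrow> 0 \<le> f' t" and decr: "\<And>t. t \<in> {c..b} \<Longrightarrow> f' t \<le> 0"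
  shows "((\<lambda>t. \<bar>f' t\<bar>) has_integral 2 * f c - f a - f b) {a..b}"
proof -
  have ftc: "(f' has_integral f y - f x) {x..y}" if "a \<le> x" "x \<le> y" "y \<le> b" for x y
    using that deriv
    by (intro fundamental_theorem_of_calculus)
       (auto simp: has_real_derivative_iff_has_vector_derivative[symmetric] intro: has_field_derivative_at_within)
  have rising: "((\<lambda>t. \<bar>f' t\<bar>) has_integral f c - f a) {a..c}"
    by (rule has_integral_eq[OF _ ftc[of a c]]) (use assms(1,2) incr in auto)
  have "((\<lambda>t. - f' t) has_integral f c - f b) {c..b}"
    using has_integral_neg[OF ftc[of c b]] assms(1,2) by simp
  then have falling: "((\<lambda>t. \<bar>f' t\<bar>) has_integral f c - f b) {c..b}"
    by (rule has_integral_eq[rotated]) (simp add: abs_of_nonpos decr)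
  from rising falling have "((\<lambda>t. \<bar>f' t\<bar>) has_integral (f c - f a) + (f c - f b)) {a..b}"
    by (rule has_integral_combine[OF assms(1,2)])
  then show ?thesis
    by (simp add: algebra_simps)
qed

lemma deriv_poly: "deriv (poly p) = poly (pderiv p)"
  by (rule ext, rule DERIV_imp_deriv) simp

lemma higher_deriv_poly: "(deriv ^^ k) (poly p) = poly ((pderiv ^^ k) p)"
  by (induction k) (simp_all add: deriv_poly)

lemma fpoly_eq_poly: "fpoly m n = poly ((smult (constA n) (monom 1 n * [:1, -1:])) ^ m)"
  by (rule ext) (simp add: fpoly_def poly_monom algebra_simps)

lemma continuous_on_higher_deriv_fpoly: "continuous_on S ((deriv ^^ k) (fpoly m n))"
  unfolding fpoly_eq_poly higher_deriv_poly by (intro continuous_intros)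

lemma constA_pos: "constA n > 0"
  by (cases n) (simp_all add: constA_def)

lemma constB_power_mult_one_minus: "constB n ^ n * (1 - constB n) = 1 / constA n"
  by (simp add: constA_def constB_def power_divide field_simps)

lemma fpoly_constB: "fpoly m n (constB n) = 1"
proof -
  have "constA n * constB n ^ n * (1 - constB n) = 1"
    using constB_power_mult_one_minus[of n] constA_pos[of n] by (simp add: mult.assoc)
  then show ?thesis
    by (simp add: fpoly_def)
qed

lemma fpoly_eq_Beta_integrand:
  "fpoly m n t = constA n ^ m * (t ^ (m * n) * (1 - t) ^ m)"
  by (simp add: fpoly_def power_mult_distrib mult.commute[of m n] power_mult)

lemma norm1_f_eq: "norm1_f m n = constA n ^ m * fact (m * n) * fact m / fact (m * n + m + 1)"
proof -
  have "((\<lambda>t. \<bar>fpoly m n t\<bar>) has_integral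
      constA n ^ m * (fact (m * n) * fact m / fact (m * n + m + 1))) {0..1}"
    using has_integral_mult_right[OF has_integral_power_mult_one_minus_power[of "m * n" m]]
    by (rule has_integral_eq[rotated])
       (auto simp: fpoly_eq_Beta_integrand less_imp_le[OF constA_pos] intro!: abs_of_nonneg[symmetric])
  then show ?thesis
    unfolding norm1_f_def by (simp add: integral_unique)
qed

lemma norm1_f_pos: "norm1_f m n > 0"
  unfolding norm1_f_eq by (intro divide_pos_pos mult_pos_pos zero_less_power constA_pos fact_gt_zero)

lemma fpoly_has_real_derivative:
  assumes "n \<ge> 1"
  shows "(fpoly m n has_real_derivative
      real m * (constA n * t ^ n * (1 - t)) ^ (m - 1) * constA n * t ^ (n - 1) * (real n - real (n + 1) * t))
      (at t)"
proof -
  have "(fpoly m n has_real_derivative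
      real m * (constA n * t ^ n * (1 - t)) ^ (m - 1)
        * (constA n * (real n * t ^ (n - 1) * (1 - t) - t ^ n))) (at t)"
    unfolding fpoly_def by (auto intro!: derivative_eq_intros simp: algebra_simps)
  moreover have "t ^ n = t ^ (n - 1) * t"
    using assms by (simp add: power_eq_if)
  ultimately show ?thesis
    by (simp add: algebra_simps)
qed

lemma has_integral_abs_deriv_fpoly:
  assumes "m \<ge> 1" "n \<ge> 1"
  shows "((\<lambda>t. \<bar>deriv (fpoly m n) t\<bar>) has_integral 2) {0..1}"
proof -
  define p where "p t = real m * (constA n * t ^ n * (1 - t)) ^ (m - 1) * constA n * t ^ (n - 1)"
    for t :: real
  define f' where "f' t = p t * (real n - real (n + 1) * t)" for t
  have deriv: "(fpoly m n has_real_derivative f' t) (at t)" for t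
    unfolding f'_def p_def using assms(2) by (rule fpoly_has_real_derivative)
  have p_nonneg: "0 \<le> p t" if "t \<in> {0..1}" for t
    using that constA_pos[of n] by (simp add: p_def)
  have B: "0 \<le> constB n" "constB n \<le> 1"
    by (simp_all add: constB_def)
  have "0 \<le> f' t" if "t \<in> {0..constB n}" for t
  proof -
    have "real n - real (n + 1) * t \<ge> 0"
      using that by (simp add: constB_def field_simps)
    then show ?thesis
      using p_nonneg[of t] that B unfolding f'_def by simp
  qed
  moreover have "f' t \<le> 0" if "t \<in> {constB n..1}" for t
  proof -
    have "real n - real (n + 1) * t \<le> 0"
      using that by (simp add: constB_def field_simps)
    then show ?thesis
      using p_nonneg[of t] that B unfolding f'_def by (simp add: mult_nonneg_nonpos)
  qed
  ultimately have "((\<lambda>t. \<bar>f' t\<bar>) has_integral 2 * fpoly m n (constB n) - fpoly m n 0 - fpoly m n 1) {0..1}"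
    using B deriv by (intro has_integral_abs_deriv_unimodal)
  moreover have "fpoly m n 0 = 0" "fpoly m n 1 = 0"
    using assms by (simp_all add: fpoly_def)
  moreover have "deriv (fpoly m n) = f'"
    using deriv by (intro ext DERIV_imp_deriv)
  ultimately show ?thesis
    by (simp add: fpoly_constB)
qed

lemma Fk_bounds:
  assumes "0 \<le> \<delta>"
  shows "integral {0..1} (\<lambda>t. \<bar>(deriv ^^ k) (fpoly m n) t\<bar>) / norm1_f m n \<le> Fk k m n \<delta>"
    and "Fk k m n \<delta>
           \<le> (1 + \<delta>) ^ (1 + k) * integral {0..1} (\<lambda>t. \<bar>(deriv ^^ k) (fpoly m n) t\<bar>) / norm1_f m n"
proof -
  let ?u = "\<lambda>t. \<bar>(deriv ^^ k) (fpoly m n) t\<bar>"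
  let ?w = "\<lambda>t::real. (1 + \<delta> * t) ^ (1 + k)"
  have integrable: "?u integrable_on {0..1}" "(\<lambda>t. ?w t * ?u t) integrable_on {0..1}"
    by (intro integrable_continuous_real continuous_intros continuous_on_higher_deriv_fpoly)+
  have "1 \<le> ?w t \<and> ?w t \<le> (1 + \<delta>) ^ (1 + k)" if "t \<in> {0..1}" for t
    using that assms by (intro conjI one_le_power power_mono) (auto simp: mult_left_le)
  note weighted = integral_weighted_bounds[OF integrable abs_ge_zero this]
  from weighted show "integral {0..1} ?u / norm1_f m n \<le> Fk k m n \<delta>"
      "Fk k m n \<delta> \<le> (1 + \<delta>) ^ (1 + k) * integral {0..1} ?u / norm1_f m n"
    using norm1_f_pos[of m n] unfolding Fk_def by (simp_all add: divide_right_mono)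
qed

lemma lambda0_eq: "lambda0 m n \<delta> = 2 / norm1_f m n"
proof -
  have "constB n ^ n - constB n ^ (n + 1) = 1 / constA n"
    by (simp add: right_diff_distrib flip: constB_power_mult_one_minus)
  then show ?thesis
    using constA_pos[of n] by (simp add: lambda0_def norm1_f_eq power_one_over)
qed

lemma lambdaM_eq:
  "lambdaM m n \<delta> = sqrt (((1 + \<delta>) ^ (2 * m + 3) - 1) / (\<delta> * real (2 * m + 3)))
      * norm2_fm m n / norm1_f m n"
  by (simp add: lambdaM_def norm1_f_eq mult_ac)

lemma Fk_m_le_lambdaM:
  assumes "0 < \<delta>"
  shows "Fk m m n \<delta> \<le> lambdaM m n \<delta>"
proof -
  let ?h = "\<lambda>t. \<bar>(deriv ^^ m) (fpoly m n) t\<bar>"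
  let ?w = "\<lambda>t::real. (1 + \<delta> * t) ^ (1 + m)"
  have "integral {0..1} (\<lambda>t. ?w t * ?h t)
      \<le> sqrt (integral {0..1} (\<lambda>t. (?w t)\<^sup>2)) * sqrt (integral {0..1} (\<lambda>t. (?h t)\<^sup>2))"
    by (intro Cauchy_Schwarz_integral integrable_continuous_real continuous_intros
        continuous_on_higher_deriv_fpoly)
  also have "integral {0..1} (\<lambda>t. (?w t)\<^sup>2) = ((1 + \<delta>) ^ (2 * m + 3) - 1) / (\<delta> * real (2 * m + 3))"
  proof -
    have "(1 + m) * 2 = 2 * m + 2"
      by simp
    then have "(?w t)\<^sup>2 = (1 + \<delta> * t) ^ (2 * m + 2)" for t
      by (simp only: power_mult[symmetric])
    then show ?thesis
      using has_integral_one_plus_mult_power[of \<delta> "2 * m + 2"] assms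
      by (simp add: integral_unique numeral_3_eq_3)
  qed
  finally show ?thesis
    using norm1_f_pos[of m n]
    unfolding Fk_def lambdaM_eq norm2_fm_def by (simp add: divide_right_mono)
qed

theorem lemma3:
  fixes m n :: nat and \<delta> :: real
  assumes "m \<ge> 2" and "n \<ge> 1" and "0 < \<delta>" and "\<delta> \<le> 10 powr (-6)"
  shows "1 \<le> Fk 0 m n \<delta> \<and> Fk 0 m n \<delta> \<le> 1 + \<delta>
      \<and> lambda0 m n \<delta> \<le> Fk 1 m n \<delta> \<and> Fk 1 m n \<delta> \<le> lambda1 m n \<delta>
      \<and> Fk m m n \<delta> \<le> lambdaM m n \<delta>"
proof -
  have "0 \<le> \<delta>" "m \<ge> 1"
    using assms(1,3) by simp_all
  have "integral {0..1} (\<lambda>t. \<bar>(deriv ^^ 0) (fpoly m n) t\<bar>) = norm1_f m n"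
    by (simp add: norm1_f_def)
  then have F0: "1 \<le> Fk 0 m n \<delta> \<and> Fk 0 m n \<delta> \<le> 1 + \<delta>"
    using Fk_bounds[OF \<open>0 \<le> \<delta>\<close>, of 0 m n] norm1_f_pos[of m n] by simp
  have "integral {0..1} (\<lambda>t. \<bar>(deriv ^^ 1) (fpoly m n) t\<bar>) = 2"
    using has_integral_abs_deriv_fpoly[OF \<open>m \<ge> 1\<close> assms(2)] by (simp add: integral_unique)
  moreover have "lambda1 m n \<delta> = (1 + \<delta>) ^ 2 * lambda0 m n \<delta>"
    by (simp add: lambda0_def lambda1_def)
  ultimately have F1: "lambda0 m n \<delta> \<le> Fk 1 m n \<delta> \<and> Fk 1 m n \<delta> \<le> lambda1 m n \<delta>"
    using Fk_bounds[OF \<open>0 \<le> \<delta>\<close>, of 1 m n] by (simp add: lambda0_eq power2_eq_square)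
  show ?thesis
    using F0 F1 Fk_m_le_lambdaM[OF assms(3)] by blast
qed

end
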